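(* Let $\triangle_{\delta,\varepsilon}$ be a sparse coloured triangle and let $\gamma$ be an integer. Suppose two distinct black dots $(\alpha,\gamma')$ and $(\beta,\delta')$ of $\triangle_{\delta,\varepsilon}$ both lie on or above the line $l_\gamma$, i.e. $\alpha\le\gamma\le\gamma'$ and $\beta\le\gamma\le\delta'$. Then either both dots lie on $l_\gamma$ (i.e. each has $\gamma$ as one of its coordinates), or they are comparable in the partial order $\preceq$.
   Context: Dots are pairs of integers $(\alpha,\beta)$. For integers $\delta<\varepsilon$, the triangle $\triangle_{\delta,\varepsilon}$ is the set of dots $(\alpha,\beta)$ with $\delta\le\alpha$, $\beta\le\varepsilon$ and $\beta-\alpha\ge 2$; its vertex is $(\delta,\varepsilon)$ and its height is $\varepsilon-\delta-1$. For a dot $(\alpha,\beta)\in\triangle_{\delta,\varepsilon}$, the sub-triangle $\triangle_{\alpha,\beta}$ is defined by the same rule (it is contained in $\triangle_{\delta,\varepsilon}$). A coloured triangle is a triangle in which each dot is coloured black or white. A coloured triangle $\triangle_{\delta,\varepsilon}$ is sparse if for every dot $(\alpha,\beta)\in\triangle_{\delta,\varepsilon}$ (including the vertex) the number of black dots in $\triangle_{\alpha,\beta}$ is at most $\beta-\alpha-1$, with equality if and only if $(\alpha,\beta)$ is black. The line $l_\gamma$ is the set of dots having $\gamma$ as one of their coordinates; a dot $(\alpha,\beta)$ lies on or above $l_\gamma$ if $\alpha\le\gamma\le\beta$. The partial order is $(\alpha,\gamma)\preceq(\beta,\delta)$ iff $\alpha\ge\beta$ and $\gamma\le\delta$. 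*)

theory Defs
  imports Main
begin

type_synonym dot = "int \<times> int"

definition triangle :: "int \<Rightarrow> int \<Rightarrow> dot set" where
  "triangle d e = {(a, b). d \<le> a \<and> b \<le> e \<and> b - a \<ge> 2}"

definition black_count :: "(dot \<Rightarrow> bool) \<Rightarrow> int \<Rightarrow> int \<Rightarrow> nat" where
  "black_count col a b = card {p \<in> triangle a b. col p}"

definition sparse :: "(dot \<Rightarrow> bool) \<Rightarrow> int \<Rightarrow> int \<Rightarrow> bool" where
  "sparse col d e \<longleftrightarrow>
     (\<forall>(a, b) \<in> triangle d e.
        int (black_count col a b) \<le> b - a - 1 \<and>
        (int (black_count col a b) = b - a - 1 \<longleftrightarrow> col (a, b)))"

definition on_line :: "int \<Rightarrow> dot \<Rightarrow> bool" where
  "on_line g p \<longleftrightarrow> fst p = g \<or> snd p = g"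

definition on_or_above :: "int \<Rightarrow> dot \<Rightarrow> bool" where
  "on_or_above g p \<longleftrightarrow> fst p \<le> g \<and> g \<le> snd p"

definition dot_le :: "dot \<Rightarrow> dot \<Rightarrow> bool" where
  "dot_le p q \<longleftrightarrow> fst p \<ge> fst q \<and> snd p \<le> snd q"

end

theory Submission
  imports Defs
begin

(* Two black dots that cross, i.e. a1 < a2 < b1 < b2, cannot coexist in a sparse triangle:
   by inclusion-exclusion the black dots of the sub-triangles at (a1,b1) and (a2,b2) put at least
   (b1-a1-1) + (b2-a2-1) - (b1-a2-1) = b2-a1-1 black dots below (a1,b2), which sparseness allows
   only if (a1,b2) is black, and then (a1,b2) itself is one dot too many.  Two black dots on or
   above the line through g are either comparable or cross with a2 \<le> g \<le> b1, and crossing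
   is impossible unless a2 = g = b1, i.e. both dots lie on the line. *)

lemma finite_triangle: "finite (triangle a b)"
proof (rule finite_subset)
  show "triangle a b \<subseteq> {a..b} \<times> {a..b}" unfolding triangle_def by auto
qed auto

lemma triangle_Int_triangle: "triangle a1 b1 \<inter> triangle a2 b2 = triangle (max a1 a2) (min b1 b2)"
  unfolding triangle_def by auto

lemma triangle_mono: "a \<le> a' \<Longrightarrow> b' \<le> b \<Longrightarrow> triangle a' b' \<subseteq> triangle a b"
  unfolding triangle_def by auto

lemma triangle_empty: "b - a < 2 \<Longrightarrow> triangle a b = {}"
  unfolding triangle_def by auto

lemma black_count_supermodular:
  assumes "a1 < a2" and "b1 < b2" and "2 \<le> b2 - a1"
  shows "black_count col a1 b1 + black_count col a2 b2 + of_bool (col (a1, b2))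
           \<le> black_count col a1 b2 + black_count col a2 b1"
proof -
  define B where "B a b = {x \<in> triangle a b. col x}" for a b
  have fin: "finite (B a b)" for a b
    unfolding B_def using finite_triangle by simp
  have Int: "B a1 b1 \<inter> B a2 b2 = B a2 b1"
    unfolding B_def using triangle_Int_triangle[of a1 b1 a2 b2] assms by auto
  have Un: "B a1 b1 \<union> B a2 b2 \<subseteq> B a1 b2"
    unfolding B_def using triangle_mono[of a1 a1 b1 b2] triangle_mono[of a1 a2 b2 b2] assms by auto
  have vertex: "(a1, b2) \<notin> B a1 b1 \<union> B a2 b2"
    unfolding B_def triangle_def using assms by auto
  have "card (B a1 b1) + card (B a2 b2) = card (B a1 b1 \<union> B a2 b2) + card (B a2 b1)"
    using card_Un_Int[OF fin fin] Int by simp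
  moreover have "card (B a1 b1 \<union> B a2 b2) + of_bool (col (a1, b2)) \<le> card (B a1 b2)"
  proof (cases "col (a1, b2)")
    case True
    with Un assms have "insert (a1, b2) (B a1 b1 \<union> B a2 b2) \<subseteq> B a1 b2"
      unfolding B_def triangle_def by auto
    then have "card (insert (a1, b2) (B a1 b1 \<union> B a2 b2)) \<le> card (B a1 b2)"
      using fin by (simp add: card_mono)
    with True vertex fin show ?thesis by simp
  next
    case False
    with Un fin show ?thesis by (simp add: card_mono)
  qed
  ultimately show ?thesis unfolding black_count_def B_def[symmetric] by linarith
qed

lemma sparse_black_count_le:
  assumes "sparse col d e" and "d \<le> a" and "b \<le> e" and "a < b"
  shows "int (black_count col a b) \<le> b - a - 1"
proof (cases "b - a \<ge> 2")
  case True
  with assms have "(a, b) \<in> triangle d e" unfolding triangle_def by auto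
  with assms(1) show ?thesis unfolding sparse_def by auto
next
  case False
  with assms(4) show ?thesis by (simp add: black_count_def triangle_empty)
qed

lemma sparse_black_count_eq_iff:
  assumes "sparse col d e" and "(a, b) \<in> triangle d e"
  shows "int (black_count col a b) = b - a - 1 \<longleftrightarrow> col (a, b)"
  using assms unfolding sparse_def by auto

lemma sparse_no_crossing_black_dots:
  assumes sparse: "sparse col d e"
    and p: "(a1, b1) \<in> triangle d e" and q: "(a2, b2) \<in> triangle d e"
    and "col (a1, b1)" and "col (a2, b2)"
    and "a1 < a2" and "a2 < b1" and "b1 < b2"
  shows False
proof -
  have bounds: "d \<le> a1" "b2 \<le> e" "2 \<le> b2 - a1" "d \<le> a2" "b1 \<le> e"
    using p q assms(6-8) unfolding triangle_def by auto
  then have outer: "(a1, b2) \<in> triangle d e"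
    unfolding triangle_def by simp
  have inner: "int (black_count col a2 b1) \<le> b1 - a2 - 1"
    using sparse_black_count_le[OF sparse] bounds assms(7) by simp
  have "int (black_count col a1 b1) = b1 - a1 - 1" "int (black_count col a2 b2) = b2 - a2 - 1"
    using sparse_black_count_eq_iff[OF sparse p] sparse_black_count_eq_iff[OF sparse q] assms(4,5)
    by auto
  moreover have "int (black_count col a1 b1) + int (black_count col a2 b2) + of_bool (col (a1, b2))
                   \<le> int (black_count col a1 b2) + int (black_count col a2 b1)"
    using black_count_supermodular[of a1 a2 b1 b2 col] assms(6-8) bounds
    by (cases "col (a1, b2)") simp_all
  moreover have "int (black_count col a1 b2) \<le> b2 - a1 - 1"
    using sparse_black_count_le[OF sparse] bounds by simp
  moreover have "int (black_count col a1 b2) = b2 - a1 - 1 \<longleftrightarrow> col (a1, b2)"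
    using sparse_black_count_eq_iff[OF sparse outer] .
  ultimately show False
    using inner by (cases "col (a1, b2)") auto
qed

lemma sparse_black_dots_above_line_meet:
  assumes "sparse col d e"
    and "(a1, b1) \<in> triangle d e" and "(a2, b2) \<in> triangle d e"
    and "col (a1, b1)" and "col (a2, b2)"
    and "a1 < a2" and "b1 < b2" and "a2 \<le> g" and "g \<le> b1"
  shows "a2 = g \<and> b1 = g"
proof -
  have "\<not> a2 < b1"
    using sparse_no_crossing_black_dots[OF assms(1-6)] assms(7) by blast
  with assms(8,9) show ?thesis by simp
qed

theorem mainTheorem1:
  fixes col :: "dot \<Rightarrow> bool" and d e g :: int and p q :: dot
  assumes "d < e"
    and "sparse col d e"
    and "p \<in> triangle d e" and "q \<in> triangle d e"
    and "col p" and "col q" and "p \<noteq> q"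
    and "on_or_above g p" and "on_or_above g q"
  shows "(on_line g p \<and> on_line g q) \<or> dot_le p q \<or> dot_le q p"
proof -
  obtain a1 b1 a2 b2 where pq: "p = (a1, b1)" "q = (a2, b2)" by fastforce
  have above: "a1 \<le> g" "g \<le> b1" "a2 \<le> g" "g \<le> b2"
    using assms(8,9) pq unfolding on_or_above_def by auto
  show ?thesis
  proof (cases "dot_le p q \<or> dot_le q p")
    case False
    then have "a1 < a2 \<and> b1 < b2 \<or> a2 < a1 \<and> b2 < b1"
      using pq unfolding dot_le_def by auto
    then have "a2 = g \<and> b1 = g \<or> a1 = g \<and> b2 = g"
      using sparse_black_dots_above_line_meet[OF assms(2) assms(3,4)[unfolded pq] assms(5,6)[unfolded pq]]
        sparse_black_dots_above_line_meet[OF assms(2) assms(4,3)[unfolded pq] assms(6,5)[unfolded pq]]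
        above by blast
    then show ?thesis using pq unfolding on_line_def by auto
  qed simp
qed

end
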